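(* Let $K\ge 1$ and $T\ge 2$ be integers and let $a_1,\dots,a_{T-1}$ be binary sequences of period $K$. Define the binary sequences $s=I(1_K,a_1,\dots,a_{T-1})$ and $s'=I(0_K,a_1,\dots,a_{T-1})$ of period $KT$. For $0\le \tau<KT$ write $\tau=\tau_1T+\tau_2$ with $0\le\tau_2\le T-1$. Then $$R_{s'}(\tau)=\begin{cases}R_s(\tau)&\text{if }\tau_2=0,\\ R_s(\tau)-2d(a_{\tau_2})-2d(a_{T-\tau_2})&\text{if }\tau_2\neq 0,\end{cases}$$ $$R_{s,s'}(\tau)=\begin{cases}TK-2K&\text{if }\tau=0,\\ R_s(\tau)-2K&\text{if }\tau_2=0,\ \tau\neq 0,\\ R_s(\tau)-2d(a_{T-\tau_2})&\text{otherwise},\end{cases}\qquad R_{s',s}(\tau)=\begin{cases}TK-2K&\text{if }\tau=0,\\ R_s(\tau)-2K&\text{if }\tau_2=0,\ \tau\neq 0,\\ R_s(\tau)-2d(a_{\tau_2})&\text{otherwise}.\end{cases}$$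
   Context: A binary sequence of period $n$ is a map $\mathbb{Z}\to\{0,1\}$ with period $n$ (indices are taken modulo $n$). For binary sequences $a,b$ of period $n$, the periodic correlation is $R_{a,b}(\tau)=\sum_{t=0}^{n-1}(-1)^{a(t)+b(t+\tau)}$ (with $t+\tau$ taken mod $n$), and $R_a(\tau)=R_{a,a}(\tau)$. For binary sequences $b_0,\dots,b_{T-1}$ of period $K$, the interleaved sequence $I(b_0,\dots,b_{T-1})$ is the binary sequence $v$ of period $KT$ defined by $v(iT+j)=b_j(i)$ for $0\le i\le K-1$, $0\le j\le T-1$. $0_K$ and $1_K$ denote the all-zero and all-one sequences of period $K$. For a binary sequence $a$ of period $K$, $d(a)=2|\{0\le t\le K-1: a(t)=1\}|-K$. *)

theory Defs
  imports Main
begin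

text \<open>A binary sequence of period n is represented as a function nat => bool
  (True = 1, False = 0); only its values at indices mod n are used.\<close>

definition corr :: "nat \<Rightarrow> (nat \<Rightarrow> bool) \<Rightarrow> (nat \<Rightarrow> bool) \<Rightarrow> nat \<Rightarrow> int" where
  "corr n a b \<tau> = (\<Sum>t<n. (-1::int) ^ (of_bool (a (t mod n)) + of_bool (b ((t + \<tau>) mod n))))"

definition acorr :: "nat \<Rightarrow> (nat \<Rightarrow> bool) \<Rightarrow> nat \<Rightarrow> int" where
  "acorr n a \<tau> = corr n a a \<tau>"

text \<open>Interleaved sequence I(b_0,...,b_{T-1}) of period K*T: v(iT+j) = b_j(i).\<close>
definition interleave :: "nat \<Rightarrow> nat \<Rightarrow> (nat \<Rightarrow> nat \<Rightarrow> bool) \<Rightarrow> nat \<Rightarrow> bool" where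
  "interleave K T b v = b ((v mod (K*T)) mod T) (((v mod (K*T)) div T) mod K)"

definition imbalance :: "nat \<Rightarrow> (nat \<Rightarrow> bool) \<Rightarrow> int" where
  "imbalance K a = 2 * int (card {t. t < K \<and> a (t mod K)}) - int K"

end

theory Submission
  imports Defs "HOL-Number_Theory.Cong"
begin

text \<open>Passing from s to s' flips s exactly at the positions t = 0 (mod T), so
  (-1)^s'(t) = (-1)^s(t) + 2 E(t) with E the indicator of T dvd t. Expanding the correlations
  bilinearly leaves, besides R_s(\<tau>), sums of (-1)^s over one residue class modulo T, i.e. over a
  cyclic shift of a single column b_j of the interleaving, which equal -d(b_j), and the number
  (K or 0) of t with both t and t + \<tau> divisible by T.\<close>

definition bit_sign :: "bool \<Rightarrow> int" where
  "bit_sign b = (if b then -1 else 1)"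

lemma corr_eq_sum_bit_sign:
  "corr n a b \<tau> = (\<Sum>t<n. bit_sign (a (t mod n)) * bit_sign (b ((t + \<tau>) mod n)))"
  unfolding corr_def bit_sign_def by (intro sum.cong) (auto simp: power_add)

lemma acorr_0: "acorr n a 0 = int n"
proof -
  have "bit_sign x * bit_sign x = 1" for x
    unfolding bit_sign_def by simp
  then show ?thesis
    unfolding acorr_def corr_eq_sum_bit_sign by simp
qed

lemma corr_perturb:
  assumes "\<And>t. bit_sign (a' t) = bit_sign (a t) + 2 * e t"
      and "\<And>t. bit_sign (b' t) = bit_sign (b t) + 2 * f t"
  shows "corr n a' b' \<tau> = corr n a b \<tau>
           + 2 * (\<Sum>t<n. e (t mod n) * bit_sign (b ((t + \<tau>) mod n)))
           + 2 * (\<Sum>t<n. bit_sign (a (t mod n)) * f ((t + \<tau>) mod n))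
           + 4 * (\<Sum>t<n. e (t mod n) * f ((t + \<tau>) mod n))"
  unfolding corr_eq_sum_bit_sign assms
  by (simp add: algebra_simps sum.distrib sum_distrib_left)

lemma sum_bit_sign_eq_neg_imbalance: "(\<Sum>k<K. bit_sign (f k)) = - imbalance K f"
proof -
  have "(\<Sum>k<K. bit_sign (f k)) = (\<Sum>k<K. 1 - 2 * of_bool (f k))"
    unfolding bit_sign_def by (intro sum.cong) auto
  also have "\<dots> = int K - 2 * int (card ({..<K} \<inter> {k. f k}))"
    by (simp add: sum_subtractf sum_distrib_left[symmetric])
  also have "{..<K} \<inter> {k. f k} = {t. t < K \<and> f (t mod K)}"
    by auto
  finally show ?thesis
    unfolding imbalance_def by simp
qed

lemma imbalance_True: "imbalance K (\<lambda>_. True) = int K"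
  unfolding imbalance_def by simp

lemma sum_lessThan_rotate:
  fixes f :: "nat \<Rightarrow> 'a::comm_monoid_add"
  shows "(\<Sum>i<K. f ((i + c) mod K)) = (\<Sum>i<K. f i)"
proof (cases "K = 0")
  case False
  have inj: "inj_on (\<lambda>i. (i + c) mod K) {..<K}"
    by (auto simp: inj_on_def) (metis cong_def cong_add_rcancel_nat mod_less)
  moreover have "(\<lambda>i. (i + c) mod K) ` {..<K} \<subseteq> {..<K}"
    using False by auto
  then have "(\<lambda>i. (i + c) mod K) ` {..<K} = {..<K}"
    using endo_inj_surj[OF finite_lessThan _ inj] by blast
  ultimately show ?thesis
    using sum.reindex[of "\<lambda>i. (i + c) mod K" "{..<K}" f] by simp
qed simp

lemma interleave_eq: "interleave K T b v = b (v mod T) (v div T mod K)"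
proof (cases "T = 0")
  case False
  have "v mod (K * T) = T * (v div T mod K) + v mod T"
    using mod_mult2_eq[of v T K] by (simp add: mult.commute)
  then show ?thesis
    unfolding interleave_def using False by simp
qed (simp add: interleave_def)

lemma interleave_mod: "interleave K T b (v mod (K * T)) = interleave K T b v"
  unfolding interleave_def by simp

lemma sum_interleave_column:
  assumes "0 < T"
  shows "(\<Sum>i<K. bit_sign (interleave K T b (i * T + x))) = - imbalance K (b (x mod T))"
proof -
  have "(\<Sum>i<K. bit_sign (interleave K T b (i * T + x)))
      = (\<Sum>i<K. bit_sign (b (x mod T) ((i + x div T) mod K)))"
    using assms by (simp add: interleave_eq)
  also have "\<dots> = - imbalance K (b (x mod T))"
    by (simp add: sum_lessThan_rotate[where f = "\<lambda>k. bit_sign (b (x mod T) k)"]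
        sum_bit_sign_eq_neg_imbalance)
  finally show ?thesis .
qed

lemma sum_residue_class:
  fixes h :: "nat \<Rightarrow> int"
  assumes "c < T"
  shows "(\<Sum>t<K * T. of_bool (t mod T = c) * h t) = (\<Sum>i<K. h (i * T + c))"
proof -
  have "(\<Sum>t<K * T. of_bool (t mod T = c) * h t) = (\<Sum>t \<in> {..<K * T} \<inter> {t. t mod T = c}. h t)"
    by simp
  also have "{..<K * T} \<inter> {t. t mod T = c} = (\<lambda>i. i * T + c) ` {..<K}"
  proof (intro equalityI subsetI)
    fix t assume t: "t \<in> {..<K * T} \<inter> {t. t mod T = c}"
    then have "t = (t div T) * T + c"
      by (metis IntD2 mem_Collect_eq div_mult_mod_eq)
    moreover have "t div T < K"
      using t by (simp add: less_mult_imp_div_less)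
    ultimately show "t \<in> (\<lambda>i. i * T + c) ` {..<K}"
      by blast
  next
    fix t assume "t \<in> (\<lambda>i. i * T + c) ` {..<K}"
    then obtain i where i: "i < K" "t = i * T + c"
      by auto
    have "i * T + c < (i + 1) * T"
      using assms by simp
    also have "\<dots> \<le> K * T"
      using i by (intro mult_right_mono) auto
    finally show "t \<in> {..<K * T} \<inter> {t. t mod T = c}"
      using i assms by simp
  qed
  also have "(\<Sum>t \<in> (\<lambda>i. i * T + c) ` {..<K}. h t) = (\<Sum>i<K. h (i * T + c))"
    using assms by (subst sum.reindex) (auto simp: inj_on_def)
  finally show ?thesis .
qed

lemma add_mod_eq_0_iff:
  assumes "0 < (T::nat)"
  shows "(t + \<tau>) mod T = 0 \<longleftrightarrow> t mod T = (T - \<tau> mod T) mod T"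
proof -
  have "[\<tau> mod T + (T - \<tau> mod T) = 0] (mod T)"
    using assms by (simp add: cong_def)
  then have "[t + \<tau> = 0] (mod T) \<longleftrightarrow> [t + \<tau> = (T - \<tau> mod T) + \<tau>] (mod T)"
    by (metis add.commute cong_def mod_add_right_eq)
  then show ?thesis
    unfolding cong_add_rcancel_nat by (simp add: cong_def)
qed

lemma sum_zero_class_shifted:
  assumes "0 < T"
  shows "(\<Sum>t<K * T. of_bool (t mod T = 0) * bit_sign (interleave K T b (t + \<tau>)))
       = - imbalance K (b (\<tau> mod T))"
  using sum_residue_class[where c = 0 and h = "\<lambda>t. bit_sign (interleave K T b (t + \<tau>))"]
    sum_interleave_column[OF assms] assms by simp

lemma sum_shifted_zero_class:
  assumes "0 < T"
  shows "(\<Sum>t<K * T. bit_sign (interleave K T b t) * of_bool ((t + \<tau>) mod T = 0))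
       = - imbalance K (b ((T - \<tau> mod T) mod T))"
proof -
  define c where "c = (T - \<tau> mod T) mod T"
  have "c < T"
    unfolding c_def using assms by simp
  have "(\<Sum>t<K * T. bit_sign (interleave K T b t) * of_bool ((t + \<tau>) mod T = 0))
      = (\<Sum>t<K * T. of_bool (t mod T = c) * bit_sign (interleave K T b t))"
    unfolding c_def add_mod_eq_0_iff[OF assms] by (simp add: mult.commute)
  also have "\<dots> = - imbalance K (b c)"
    using sum_residue_class[OF \<open>c < T\<close>] sum_interleave_column[OF assms] \<open>c < T\<close> by simp
  finally show ?thesis
    unfolding c_def .
qed

lemma sum_zero_class_pairs:
  assumes "0 < T"
  shows "(\<Sum>t<K * T. of_bool (t mod T = 0) * of_bool ((t + \<tau>) mod T = 0) :: int)
       = (if \<tau> mod T = 0 then int K else 0)"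
  using sum_residue_class[where c = 0 and h = "\<lambda>t. of_bool ((t + \<tau>) mod T = 0)"] assms by simp

theorem theorem2:
  fixes K T :: nat and a :: "nat \<Rightarrow> nat \<Rightarrow> bool" and \<tau> :: nat
  assumes "K \<ge> 1" and "T \<ge> 2" and "\<tau> < K * T"
  defines "s \<equiv> interleave K T (\<lambda>j. if j = 0 then (\<lambda>_. True) else a j)"
      and "s' \<equiv> interleave K T (\<lambda>j. if j = 0 then (\<lambda>_. False) else a j)"
      and "\<tau>2 \<equiv> \<tau> mod T"
  shows "(acorr (K*T) s' \<tau> =
           (if \<tau>2 = 0 then acorr (K*T) s \<tau>
            else acorr (K*T) s \<tau> - 2 * imbalance K (a \<tau>2) - 2 * imbalance K (a (T - \<tau>2))) \<and>
         corr (K*T) s s' \<tau> =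
           (if \<tau> = 0 then int T * int K - 2 * int K
            else if \<tau>2 = 0 then acorr (K*T) s \<tau> - 2 * int K
            else acorr (K*T) s \<tau> - 2 * imbalance K (a (T - \<tau>2))) \<and>
         corr (K*T) s' s \<tau> =
           (if \<tau> = 0 then int T * int K - 2 * int K
            else if \<tau>2 = 0 then acorr (K*T) s \<tau> - 2 * int K
            else acorr (K*T) s \<tau> - 2 * imbalance K (a \<tau>2)))"
proof -
  define b where "b j = (if j = 0 then (\<lambda>_. True) else a j)" for j
  define E :: "nat \<Rightarrow> int" where "E t = of_bool (t mod T = 0)" for t
  have "0 < T"
    using assms by simp
  have s: "s = interleave K T b"
    unfolding s_def b_def ..
  have flip: "bit_sign (s' t) = bit_sign (s t) + 2 * E t" for t
    unfolding s_def s'_def E_def interleave_eq bit_sign_def by simp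
  have periodic: "s (t mod (K * T)) = s t" "E (t mod (K * T)) = E t" for t
    unfolding s E_def by (simp_all add: interleave_mod mod_mod_cancel)
  have A: "(\<Sum>t<K * T. E t * bit_sign (s (t + \<tau>))) = - imbalance K (b \<tau>2)"
    unfolding E_def s \<tau>2_def using sum_zero_class_shifted[OF \<open>0 < T\<close>] .
  have B: "(\<Sum>t<K * T. bit_sign (s t) * E (t + \<tau>)) = - imbalance K (b ((T - \<tau>2) mod T))"
    unfolding E_def s \<tau>2_def using sum_shifted_zero_class[OF \<open>0 < T\<close>] .
  have C: "(\<Sum>t<K * T. E t * E (t + \<tau>)) = (if \<tau>2 = 0 then int K else 0)"
    unfolding E_def \<tau>2_def using sum_zero_class_pairs[OF \<open>0 < T\<close>] .
  have "acorr (K * T) s' \<tau> = acorr (K * T) s \<tau> + 2 * (- imbalance K (b \<tau>2))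
          + 2 * (- imbalance K (b ((T - \<tau>2) mod T))) + 4 * (if \<tau>2 = 0 then int K else 0)"
    unfolding acorr_def corr_perturb[OF flip flip] periodic A B C ..
  moreover have "corr (K * T) s s' \<tau> = acorr (K * T) s \<tau> + 2 * (- imbalance K (b ((T - \<tau>2) mod T)))"
    using corr_perturb[of s s "\<lambda>_. 0" s' s E] flip by (simp add: acorr_def periodic B)
  moreover have "corr (K * T) s' s \<tau> = acorr (K * T) s \<tau> + 2 * (- imbalance K (b \<tau>2))"
    using corr_perturb[of s' s E s s "\<lambda>_. 0"] flip by (simp add: acorr_def periodic A)
  moreover have "\<tau>2 < T" "\<tau> = 0 \<Longrightarrow> \<tau>2 = 0"
    unfolding \<tau>2_def using \<open>0 < T\<close> by simp_all
  ultimately show ?thesis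
    using acorr_0[of "K * T" s] by (auto simp: b_def imbalance_True)
qed

end
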